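(* Let $f:\mathbb{R}^m\to\mathbb{R}$ be $C^2$, let $\delta_0,\dots,\delta_m$ be distinct reals, $\tau>0$, and let $x\in\mathbb{R}^m$ with $\nabla f(x)\neq0$. With $A(x)$ and $w(x)$ as defined in the context: (1) $\|\nabla f(x)\|/\mathrm{sp}(A(x))\le\|w(x)\|\le\|\nabla f(x)\|/\mathrm{minsp}(A(x))$; (2) $\|\nabla f(x)\|^2/\mathrm{sp}(A(x))\le\langle w(x),\nabla f(x)\rangle\le\|\nabla f(x)\|^2/\mathrm{minsp}(A(x))$ and $\mathrm{minsp}(A(x))\|w(x)\|^2\le\langle w(x),\nabla f(x)\rangle\le\mathrm{sp}(A(x))\|w(x)\|^2$; (3) there is $\bar\gamma>0$ such that for all $0<\gamma<\bar\gamma$, $f(x-\gamma w(x))-f(x)\le-\gamma\langle w(x),\nabla f(x)\rangle/3$.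
   Context: For a real symmetric matrix $A$, $\mathrm{sp}(A)$ (resp. $\mathrm{minsp}(A)$) is the maximum (resp. minimum) of $|\lambda|$ over eigenvalues $\lambda$ of $A$. For an invertible real symmetric $A$, $pr_{A,+}$ (resp. $pr_{A,-}$) is the orthogonal projection onto the span of eigenvectors of $A$ with positive (resp. negative) eigenvalues. Let $\kappa:=\frac12\min_{i\ne j}|\delta_i-\delta_j|$. For $x$ with $\nabla f(x)\ne0$: $\delta(x):=\delta_j$ where $j$ is the smallest index in $\{0,\dots,m\}$ with $\mathrm{minsp}(\nabla^2f(x)+\delta_j\|\nabla f(x)\|^{\tau}I)\ge\kappa\|\nabla f(x)\|^{\tau}$ (such $j$ exists); $A(x):=\nabla^2 f(x)+\delta(x)\|\nabla f(x)\|^{\tau}I$; $v(x):=A(x)^{-1}\nabla f(x)$; $w(x):=pr_{A(x),+}v(x)-pr_{A(x),-}v(x)$. *)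

theory Defs
  imports "HOL-Analysis.Analysis"
begin

definition mat_eigenvalues :: "real^'n^'n \<Rightarrow> real set" where
  "mat_eigenvalues A = {l. \<exists>v. v \<noteq> 0 \<and> A *v v = l *\<^sub>R v}"

definition sp :: "real^'n^'n \<Rightarrow> real" where
  "sp A = Max (abs ` mat_eigenvalues A)"

definition minsp :: "real^'n^'n \<Rightarrow> real" where
  "minsp A = Min (abs ` mat_eigenvalues A)"

definition orth_proj :: "('a::real_inner) set \<Rightarrow> 'a \<Rightarrow> 'a" where
  "orth_proj S v = (THE p. p \<in> S \<and> (\<forall>s\<in>S. inner (v - p) s = 0))"

definition pr_pos :: "real^'n^'n \<Rightarrow> real^'n \<Rightarrow> real^'n" where
  "pr_pos A = orth_proj (span {v. \<exists>l>0. A *v v = l *\<^sub>R v})"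

definition pr_neg :: "real^'n^'n \<Rightarrow> real^'n \<Rightarrow> real^'n" where
  "pr_neg A = orth_proj (span {v. \<exists>l<0. A *v v = l *\<^sub>R v})"

definition kappa :: "(nat \<Rightarrow> real) \<Rightarrow> nat \<Rightarrow> real" where
  "kappa \<delta> m = Min {\<bar>\<delta> i - \<delta> j\<bar> | i j. i \<le> m \<and> j \<le> m \<and> i \<noteq> j} / 2"

definition delta_sel :: "(nat \<Rightarrow> real) \<Rightarrow> real \<Rightarrow> real^'n^'n \<Rightarrow> real^'n \<Rightarrow> real" where
  "delta_sel \<delta> \<tau> H g =
     \<delta> (LEAST j. j \<le> CARD('n) \<and>
         minsp (H + (\<delta> j * norm g powr \<tau>) *\<^sub>R mat 1) \<ge> kappa \<delta> CARD('n) * norm g powr \<tau>)"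

definition A_mat :: "(nat \<Rightarrow> real) \<Rightarrow> real \<Rightarrow> real^'n^'n \<Rightarrow> real^'n \<Rightarrow> real^'n^'n" where
  "A_mat \<delta> \<tau> H g = H + (delta_sel \<delta> \<tau> H g * norm g powr \<tau>) *\<^sub>R mat 1"

definition v_vec :: "(nat \<Rightarrow> real) \<Rightarrow> real \<Rightarrow> real^'n^'n \<Rightarrow> real^'n \<Rightarrow> real^'n" where
  "v_vec \<delta> \<tau> H g = matrix_inv (A_mat \<delta> \<tau> H g) *v g"

definition w_vec :: "(nat \<Rightarrow> real) \<Rightarrow> real \<Rightarrow> real^'n^'n \<Rightarrow> real^'n \<Rightarrow> real^'n" where
  "w_vec \<delta> \<tau> H g =
     pr_pos (A_mat \<delta> \<tau> H g) (v_vec \<delta> \<tau> H g) - pr_neg (A_mat \<delta> \<tau> H g) (v_vec \<delta> \<tau> H g)"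

end

theory Submission
  imports Defs
begin

text \<open>
  A symmetric matrix has an orthonormal eigenbasis. In such a basis \<open>v = A\<inverse>g\<close> has coefficients
  \<open>g\<^sub>u / \<lambda>\<^sub>u\<close>, and flipping the sign of the components with \<open>\<lambda>\<^sub>u < 0\<close> gives \<open>w\<close> with coefficients
  \<open>g\<^sub>u / \<bar>\<lambda>\<^sub>u\<bar>\<close>. Since \<open>minsp A \<le> \<bar>\<lambda>\<^sub>u\<bar> \<le> sp A\<close>, parts (1) and (2) are comparisons of sums
  of the nonnegative terms \<open>g\<^sub>u\<^sup>2\<close>, once we know \<open>minsp A > 0\<close>. That positivity comes from a
  pigeonhole argument: the \<open>m + 1\<close> shifts \<open>\<delta>\<^sub>j \<parallel>g\<parallel>\<^sup>\<tau>\<close> are \<open>2\<kappa> \<parallel>g\<parallel>\<^sup>\<tau>\<close>-separated, so they cannot all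
  come within \<open>\<kappa> \<parallel>g\<parallel>\<^sup>\<tau>\<close> of one of the at most \<open>m\<close> eigenvalues of the Hessian (which is symmetric by
  continuity of the second derivative). Finally \<open>\<langle>w, \<nabla>f(x)\<rangle> > 0\<close> makes \<open>-w\<close> a descent direction, and
  Armijo's condition with constant \<open>1/3\<close> holds for small steps.
\<close>

definition orthonormal :: "'a::real_inner set \<Rightarrow> bool" where
  "orthonormal B \<longleftrightarrow> pairwise orthogonal B \<and> (\<forall>u\<in>B. norm u = 1)"

lemma inner_sum_orthonormal:
  fixes B :: "'a::real_inner set"
  assumes fin: "finite B" and B: "orthonormal B" and u: "u \<in> B"
  shows "(\<Sum>v\<in>B. c v *\<^sub>R v) \<bullet> u = c u"
proof -
  have "(\<Sum>v\<in>B. c v *\<^sub>R v) \<bullet> u = c u * (u \<bullet> u) + (\<Sum>v\<in>B-{u}. c v * (v \<bullet> u))"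
    using sum.remove[OF fin u] by (simp add: inner_sum_left)
  also have "(\<Sum>v\<in>B-{u}. c v * (v \<bullet> u)) = 0"
    using B u by (intro sum.neutral) (auto simp: orthonormal_def pairwise_def orthogonal_def)
  also have "u \<bullet> u = 1"
    using B u by (simp add: orthonormal_def dot_square_norm)
  finally show ?thesis by simp
qed

lemma inner_sum_sum_orthonormal:
  fixes B :: "'a::real_inner set"
  assumes "finite B" and "orthonormal B"
  shows "(\<Sum>u\<in>B. a u *\<^sub>R u) \<bullet> (\<Sum>u\<in>B. b u *\<^sub>R u) = (\<Sum>u\<in>B. a u * b u)"
proof -
  have "(\<Sum>u\<in>B. a u *\<^sub>R u) \<bullet> (\<Sum>u\<in>B. b u *\<^sub>R u) = (\<Sum>u\<in>B. b u * ((\<Sum>v\<in>B. a v *\<^sub>R v) \<bullet> u))"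
    by (simp add: inner_sum_right)
  then show ?thesis
    using inner_sum_orthonormal[OF assms] by (simp add: mult.commute)
qed

lemma orthonormal_basis_expansion:
  fixes B :: "'a::real_inner set"
  assumes fin: "finite B" and B: "orthonormal B" and spB: "span B = UNIV"
  shows "x = (\<Sum>u\<in>B. (x \<bullet> u) *\<^sub>R u)"
proof -
  define d where "d = x - (\<Sum>u\<in>B. (x \<bullet> u) *\<^sub>R u)"
  have "orthogonal d u" if "u \<in> B" for u
    using inner_sum_orthonormal[OF fin B that]
    unfolding d_def orthogonal_def by (simp add: inner_diff_left)
  then have "orthogonal d d"
    using orthogonal_to_span[of d B d] spB by auto
  then show ?thesis
    unfolding d_def orthogonal_def by simp
qed

lemma self_adjoint_rayleigh_max_eigenvector:
  fixes T :: "'a::real_inner \<Rightarrow> 'a"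
  assumes lin: "linear T" and adj: "\<And>x y. T x \<bullet> y = x \<bullet> T y"
    and S: "subspace S" and TS: "T ` S \<subseteq> S" and u: "u \<in> S" "norm u = 1"
    and max: "\<And>x. x \<in> S \<Longrightarrow> x \<bullet> T x \<le> (u \<bullet> T u) * (x \<bullet> x)"
  shows "T u = (u \<bullet> T u) *\<^sub>R u"
proof -
  define \<mu> where "\<mu> = u \<bullet> T u"
  define r where "r = T u - \<mu> *\<^sub>R u"
  have uu: "u \<bullet> u = 1"
    using u by (simp add: dot_square_norm)
  have rS: "r \<in> S"
    unfolding r_def using TS u S by (auto simp: subspace_diff subspace_scale)
  have ur: "u \<bullet> r = 0"
    unfolding r_def \<mu>_def using uu by (simp add: inner_diff_right)
  have rTu: "r \<bullet> T u = r \<bullet> r"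
  proof -
    have "r \<bullet> T u = r \<bullet> (r + \<mu> *\<^sub>R u)"
      unfolding r_def by simp
    then show ?thesis
      using ur by (simp add: inner_add_right inner_commute)
  qed
  have uTr: "u \<bullet> T r = r \<bullet> r"
    using rTu adj[of r u] adj[of u r] by (simp add: inner_commute)
  text \<open>If \<open>r \<noteq> 0\<close>, moving from \<open>u\<close> along \<open>r\<close> increases the Rayleigh quotient to first order.\<close>
  define C where "C = \<mu> * (r \<bullet> r) - r \<bullet> T r"
  have quad: "2 * t * (r \<bullet> r) \<le> t\<^sup>2 * C" for t
  proof -
    have "u + t *\<^sub>R r \<in> S"
      using u rS S by (simp add: subspace_add subspace_scale)
    then have le: "(u + t *\<^sub>R r) \<bullet> T (u + t *\<^sub>R r) \<le> \<mu> * ((u + t *\<^sub>R r) \<bullet> (u + t *\<^sub>R r))"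
      unfolding \<mu>_def by (rule max)
    have quad_form: "(u + t *\<^sub>R r) \<bullet> T (u + t *\<^sub>R r) = \<mu> + 2 * t * (r \<bullet> r) + t\<^sup>2 * (r \<bullet> T r)"
      using uTr rTu
      by (simp add: \<mu>_def linear_add[OF lin] linear_scale[OF lin] inner_add_left inner_add_right
          power2_eq_square algebra_simps)
    have norm_sq: "(u + t *\<^sub>R r) \<bullet> (u + t *\<^sub>R r) = 1 + t\<^sup>2 * (r \<bullet> r)"
      using ur uu inner_commute[of r u]
      by (simp add: inner_add_left inner_add_right power2_eq_square algebra_simps)
    from le show ?thesis
      unfolding quad_form norm_sq C_def by (simp add: algebra_simps)
  qed
  have "r \<bullet> r \<le> 0"
  proof (rule ccontr)
    assume "\<not> r \<bullet> r \<le> 0"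
    then have rr: "r \<bullet> r > 0" by linarith
    define t where "t = (r \<bullet> r) / (\<bar>C\<bar> + 1)"
    have t: "t > 0"
      unfolding t_def using rr by simp
    have "2 * (r \<bullet> r) \<le> t * C"
      using quad[of t] t by (simp add: power2_eq_square)
    also have "\<dots> \<le> t * \<bar>C\<bar>"
      using t by (simp add: mult_left_mono)
    also have "\<dots> < r \<bullet> r"
      unfolding t_def using rr by (simp add: divide_less_eq algebra_simps)
    finally show False
      using rr by simp
  qed
  then have "r = 0"
    by (metis inner_gt_zero_iff not_le)
  then show ?thesis
    unfolding r_def \<mu>_def by simp
qed

lemma self_adjoint_orthonormal_eigenbasis_subspace:
  fixes T :: "'a::euclidean_space \<Rightarrow> 'a"
  assumes lin: "linear T" and adj: "\<And>x y. T x \<bullet> y = x \<bullet> T y"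
  shows "subspace S \<Longrightarrow> T ` S \<subseteq> S \<Longrightarrow>
    \<exists>B\<subseteq>S. orthonormal B \<and> span B = S \<and> (\<forall>u\<in>B. T u = (u \<bullet> T u) *\<^sub>R u)"
proof (induction "dim S" arbitrary: S rule: less_induct)
  case less
  note S = less.prems(1) and TS = less.prems(2)
  show ?case
  proof (cases "S = {0}")
    case True
    then show ?thesis
      by (intro exI[of _ "{}"]) (auto simp: orthonormal_def)
  next
    case False
    then obtain z where zS: "z \<in> S" and z0: "z \<noteq> 0"
      using S subspace_0 by blast
    define K where "K = S \<inter> sphere 0 1"
    have "compact K"
      unfolding K_def using closed_subspace[OF S] by (intro closed_Int_compact) auto
    moreover have "z /\<^sub>R norm z \<in> K"
      unfolding K_def using zS z0 S by (simp add: subspace_scale)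
    moreover have "continuous_on K (\<lambda>x. x \<bullet> T x)"
      using lin by (intro continuous_intros linear_continuous_on)
        (simp add: linear_conv_bounded_linear)
    ultimately obtain u where uK: "u \<in> K" and umax: "\<forall>y\<in>K. y \<bullet> T y \<le> u \<bullet> T u"
      using continuous_attains_sup[of K "\<lambda>x. x \<bullet> T x"] by blast
    have uS: "u \<in> S" and nu: "norm u = 1"
      using uK unfolding K_def by auto
    have "x \<bullet> T x \<le> (u \<bullet> T u) * (x \<bullet> x)" if xS: "x \<in> S" for x
    proof (cases "x = 0")
      case False
      have "x /\<^sub>R norm x \<in> K"
        unfolding K_def using xS False S by (simp add: subspace_scale)
      then have "(x /\<^sub>R norm x) \<bullet> T (x /\<^sub>R norm x) \<le> u \<bullet> T u"
        using umax by blast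
      then have "(x \<bullet> T x) / (x \<bullet> x) \<le> u \<bullet> T u"
        using False by (simp add: linear_scale[OF lin] dot_square_norm power2_eq_square field_split_simps)
      then show ?thesis
        using False by (simp add: divide_le_eq)
    qed (simp add: linear_0[OF lin])
    then have Tu: "T u = (u \<bullet> T u) *\<^sub>R u"
      by (rule self_adjoint_rayleigh_max_eigenvector[OF lin adj S TS uS nu])
    define S' where "S' = {y \<in> S. u \<bullet> y = 0}"
    have S': "subspace S'"
      unfolding S'_def subspace_def using S
      by (auto simp: subspace_0 subspace_add subspace_scale inner_add_right)
    have TS': "T ` S' \<subseteq> S'"
    proof
      fix z assume "z \<in> T ` S'"
      then obtain y where "y \<in> S" "u \<bullet> y = 0" "z = T y"
        unfolding S'_def by auto
      moreover have "u \<bullet> T y = (u \<bullet> T u) * (u \<bullet> y)"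
        by (metis Tu adj inner_scaleR_left)
      ultimately show "z \<in> S'"
        unfolding S'_def using TS by auto
    qed
    have "u \<notin> S'"
      unfolding S'_def using nu by (simp add: dot_square_norm)
    then have "S' \<subset> S"
      using uS unfolding S'_def by blast
    then have "dim S' < dim S"
      using dim_psubset span_eq_iff S S' by metis
    from less.hyps[OF this S' TS'] obtain B' where
      B': "B' \<subseteq> S'" "orthonormal B'" "span B' = S'" "\<forall>u\<in>B'. T u = (u \<bullet> T u) *\<^sub>R u"
      by blast
    show ?thesis
    proof (intro exI[of _ "insert u B'"] conjI)
      show "insert u B' \<subseteq> S"
        using B'(1) uS unfolding S'_def by auto
      show "orthonormal (insert u B')"
        using B'(1,2) nu unfolding orthonormal_def pairwise_insert S'_def
        by (auto simp: orthogonal_def inner_commute)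
      show "\<forall>v\<in>insert u B'. T v = (v \<bullet> T v) *\<^sub>R v"
        using B'(4) Tu by auto
      show "span (insert u B') = S"
      proof
        show "span (insert u B') \<subseteq> S"
          using B'(1) uS S unfolding S'_def by (intro span_minimal) auto
        show "S \<subseteq> span (insert u B')"
        proof
          fix s assume "s \<in> S"
          then have "s - (u \<bullet> s) *\<^sub>R u \<in> span B'"
            using B'(3) uS S nu
            by (simp add: S'_def subspace_diff subspace_scale inner_diff_right dot_square_norm)
          then show "s \<in> span (insert u B')"
            using span_breakdown_eq by blast
        qed
      qed
    qed
  qed
qed

lemma inner_matrix_vector_symmetric:
  fixes A :: "real^'n^'n"
  assumes "transpose A = A"
  shows "(A *v x) \<bullet> y = x \<bullet> (A *v y)"
  by (metis assms dot_lmul_matrix vector_transpose_matrix)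

definition orthonormal_eigenbasis :: "real^'n^'n \<Rightarrow> (real^'n) set \<Rightarrow> bool" where
  "orthonormal_eigenbasis A B \<longleftrightarrow> finite B \<and> B \<noteq> {} \<and> orthonormal B \<and> span B = UNIV
     \<and> (\<forall>u\<in>B. A *v u = (u \<bullet> (A *v u)) *\<^sub>R u)"

lemma symmetric_matrix_orthonormal_eigenbasis:
  fixes A :: "real^'n^'n"
  assumes symA: "transpose A = A"
  obtains B where "orthonormal_eigenbasis A B"
proof -
  obtain B where B: "orthonormal B" "span B = UNIV" "\<forall>u\<in>B. A *v u = (u \<bullet> (A *v u)) *\<^sub>R u"
    using self_adjoint_orthonormal_eigenbasis_subspace[of "(*v) A" UNIV]
      inner_matrix_vector_symmetric[OF symA] by (auto simp: matrix_vector_mul_linear)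
  have "independent B"
    using B(1) pairwise_orthogonal_independent by (force simp: orthonormal_def)
  then have "finite B"
    using independent_bound by blast
  moreover have "B \<noteq> {}"
  proof
    assume "B = {}"
    then have "(axis undefined 1 :: real^'n) \<in> span {}"
      using B(2) by simp
    then show False
      by (simp add: axis_eq_0_iff)
  qed
  ultimately show ?thesis
    using that B unfolding orthonormal_eigenbasis_def by blast
qed
lemma mat_eigenvalues_eq_image:
  fixes A :: "real^'n^'n"
  assumes symA: "transpose A = A" and B: "orthonormal_eigenbasis A B"
  shows "mat_eigenvalues A = (\<lambda>u. u \<bullet> (A *v u)) ` B"
proof
  have fin: "finite B" and onB: "orthonormal B" and spB: "span B = UNIV"
    and ev: "\<forall>u\<in>B. A *v u = (u \<bullet> (A *v u)) *\<^sub>R u"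
    using B unfolding orthonormal_eigenbasis_def by auto
  show "(\<lambda>u. u \<bullet> (A *v u)) ` B \<subseteq> mat_eigenvalues A"
  proof
    fix l assume "l \<in> (\<lambda>u. u \<bullet> (A *v u)) ` B"
    then obtain u where "u \<in> B" "l = u \<bullet> (A *v u)"
      by blast
    moreover have "u \<noteq> 0"
      using onB \<open>u \<in> B\<close> by (auto simp: orthonormal_def)
    ultimately show "l \<in> mat_eigenvalues A"
      unfolding mat_eigenvalues_def using ev by blast
  qed
  show "mat_eigenvalues A \<subseteq> (\<lambda>u. u \<bullet> (A *v u)) ` B"
  proof
    fix l assume "l \<in> mat_eigenvalues A"
    then obtain v where v0: "v \<noteq> 0" and Av: "A *v v = l *\<^sub>R v"
      unfolding mat_eigenvalues_def by auto
    obtain u where uB: "u \<in> B" and vu: "v \<bullet> u \<noteq> 0"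
      using orthonormal_basis_expansion[OF fin onB spB, of v] v0
      by (metis (no_types, lifting) scale_eq_0_iff sum.neutral)
    have "l * (v \<bullet> u) = (A *v v) \<bullet> u"
      using Av by simp
    also have "\<dots> = (u \<bullet> (A *v u)) * (v \<bullet> u)"
      using inner_matrix_vector_symmetric[OF symA] ev uB by (metis inner_scaleR_right)
    finally show "l \<in> (\<lambda>u. u \<bullet> (A *v u)) ` B"
      using uB vu by simp
  qed
qed

lemma symmetric_mat_eigenvalues:
  fixes A :: "real^'n^'n"
  assumes symA: "transpose A = A"
  shows "finite (mat_eigenvalues A)" and "mat_eigenvalues A \<noteq> {}"
    and "card (mat_eigenvalues A) \<le> CARD('n)"
proof -
  obtain B where B: "orthonormal_eigenbasis A B"
    using symmetric_matrix_orthonormal_eigenbasis[OF symA] by blast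
  then have "independent B" and fin: "finite B" and "B \<noteq> {}"
    using pairwise_orthogonal_independent
    by (force simp: orthonormal_eigenbasis_def orthonormal_def)+
  then have "card B \<le> CARD('n)"
    using independent_bound[of B] by simp
  then show "finite (mat_eigenvalues A)" "mat_eigenvalues A \<noteq> {}"
    "card (mat_eigenvalues A) \<le> CARD('n)"
    unfolding mat_eigenvalues_eq_image[OF symA B]
    using card_image_le[OF fin, of "\<lambda>u. u \<bullet> (A *v u)"] fin \<open>B \<noteq> {}\<close> by auto
qed

lemma symmetric_minsp_le_abs_eigenvalue:
  fixes A :: "real^'n^'n"
  assumes "transpose A = A" and "l \<in> mat_eigenvalues A"
  shows "minsp A \<le> \<bar>l\<bar>" and "\<bar>l\<bar> \<le> sp A"
  using assms symmetric_mat_eigenvalues(1)[OF assms(1)] unfolding minsp_def sp_def by auto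

lemma symmetric_minsp_le_sp:
  fixes A :: "real^'n^'n"
  assumes "transpose A = A"
  shows "minsp A \<le> sp A"
  using symmetric_minsp_le_abs_eigenvalue[OF assms] symmetric_mat_eigenvalues(2)[OF assms]
  by (meson all_not_in_conv order_trans)

lemma mat_eigenvalues_add_scaled_id:
  fixes H :: "real^'n^'n"
  shows "mat_eigenvalues (H + c *\<^sub>R mat 1) = (\<lambda>l. l + c) ` mat_eigenvalues H"
proof -
  have "(H + c *\<^sub>R mat 1) *v v = l *\<^sub>R v \<longleftrightarrow> H *v v = (l - c) *\<^sub>R v" for v l
    by (auto simp: matrix_vector_mult_add_rdistrib scaleR_matrix_vector_assoc[symmetric]
        algebra_simps)
  then show ?thesis
    unfolding mat_eigenvalues_def image_def by force
qed

lemma transpose_add_scaled_id: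
  fixes H :: "real^'n^'n"
  assumes "transpose H = H"
  shows "transpose (H + c *\<^sub>R mat 1) = H + c *\<^sub>R mat 1"
  using assms by (simp add: vec_eq_iff transpose_def mat_def)

lemma matrix_vector_mult_matrix_inv:
  fixes A :: "real^'n^'n"
  assumes "invertible A"
  shows "A *v (matrix_inv A *v y) = y"
proof -
  have "A ** matrix_inv A = mat 1"
    using someI_ex[OF assms[unfolded invertible_def]] unfolding matrix_inv_def by blast
  then show ?thesis
    by (simp add: matrix_vector_mul_assoc)
qed

lemma invertible_if_0_notin_mat_eigenvalues:
  fixes A :: "real^'n^'n"
  assumes "0 \<notin> mat_eigenvalues A"
  shows "invertible A"
proof -
  have "\<forall>x. A *v x = 0 \<longrightarrow> x = 0"
    using assms unfolding mat_eigenvalues_def by auto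
  then show ?thesis
    using matrix_left_invertible_ker invertible_left_inverse by blast
qed

lemma orth_proj_span_eq:
  fixes C :: "'a::real_inner set"
  assumes p: "p \<in> span C" and perp: "\<And>c. c \<in> C \<Longrightarrow> (y - p) \<bullet> c = 0"
  shows "orth_proj (span C) y = p"
  unfolding orth_proj_def
proof (rule the_equality)
  have perp_span: "\<forall>s\<in>span C. (y - p) \<bullet> s = 0"
    using perp orthogonal_to_span[of _ C "y - p"] by (auto simp: orthogonal_def)
  then show "p \<in> span C \<and> (\<forall>s\<in>span C. (y - p) \<bullet> s = 0)"
    using p by blast
  fix q assume q: "q \<in> span C \<and> (\<forall>s\<in>span C. (y - q) \<bullet> s = 0)"
  then have "p - q \<in> span C"
    using p by (simp add: span_diff)
  then have "(y - q) \<bullet> (p - q) = 0" "(y - p) \<bullet> (p - q) = 0"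
    using q perp_span by auto
  then have "(p - q) \<bullet> (p - q) = 0"
    by (simp add: inner_diff_left inner_diff_right algebra_simps)
  then show "q = p" by simp
qed

lemma orth_proj_eigenvectors:
  fixes A :: "real^'n^'n"
  assumes symA: "transpose A = A" and B: "orthonormal_eigenbasis A B"
  shows "orth_proj (span {v. \<exists>l. R l \<and> A *v v = l *\<^sub>R v}) y =
     (\<Sum>u\<in>B. (if R (u \<bullet> (A *v u)) then y \<bullet> u else 0) *\<^sub>R u)"
proof (rule orth_proj_span_eq)
  have fin: "finite B" and onB: "orthonormal B" and spB: "span B = UNIV"
    and ev: "\<forall>u\<in>B. A *v u = (u \<bullet> (A *v u)) *\<^sub>R u"
    using B unfolding orthonormal_eigenbasis_def by auto
  let ?C = "{v. \<exists>l. R l \<and> A *v v = l *\<^sub>R v}"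
  let ?p = "\<Sum>u\<in>B. (if R (u \<bullet> (A *v u)) then y \<bullet> u else 0) *\<^sub>R u"
  show "?p \<in> span ?C"
    using ev by (intro span_sum) (auto intro: span_base span_scale span_zero)
  fix c assume "c \<in> ?C"
  then obtain l where Rl: "R l" and Ac: "A *v c = l *\<^sub>R c"
    by blast
  text \<open>Eigenvectors of a symmetric matrix for different eigenvalues are orthogonal.\<close>
  have cu: "c \<bullet> u = 0" if "u \<in> B" and "\<not> R (u \<bullet> (A *v u))" for u
  proof -
    have "l * (c \<bullet> u) = (u \<bullet> (A *v u)) * (c \<bullet> u)"
      using inner_matrix_vector_symmetric[OF symA, of c u] Ac ev that(1)
      by (metis inner_scaleR_left inner_scaleR_right)
    moreover have "l \<noteq> u \<bullet> (A *v u)"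
      using Rl that(2) by auto
    ultimately show ?thesis by simp
  qed
  have "(y - ?p) \<bullet> c = (y - ?p) \<bullet> (\<Sum>u\<in>B. (c \<bullet> u) *\<^sub>R u)"
    using orthonormal_basis_expansion[OF fin onB spB, of c] by simp
  also have "\<dots> = (\<Sum>u\<in>B. (c \<bullet> u) * ((y - ?p) \<bullet> u))"
    by (simp add: inner_sum_right)
  also have "\<dots> = 0"
    using cu inner_sum_orthonormal[OF fin onB] by (intro sum.neutral) (simp add: inner_diff_left)
  finally show "(y - ?p) \<bullet> c = 0" .
qed

lemma orthonormal_weighted_expansion_bounds:
  fixes B :: "'a::real_inner set" and g :: 'a
  assumes fin: "finite B" and onB: "orthonormal B" and spB: "span B = UNIV"
    and m: "0 < m" and \<mu>: "\<And>u. u \<in> B \<Longrightarrow> m \<le> \<mu> u \<and> \<mu> u \<le> M"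
  defines "w \<equiv> \<Sum>u\<in>B. ((g \<bullet> u) / \<mu> u) *\<^sub>R u"
  shows "norm g / M \<le> norm w" and "norm w \<le> norm g / m"
    and "norm g ^ 2 / M \<le> w \<bullet> g" and "w \<bullet> g \<le> norm g ^ 2 / m"
    and "m * norm w ^ 2 \<le> w \<bullet> g" and "w \<bullet> g \<le> M * norm w ^ 2"
proof -
  define a where "a u = (g \<bullet> u)\<^sup>2" for u
  have g_eq: "(\<Sum>u\<in>B. (g \<bullet> u) *\<^sub>R u) = g"
    using orthonormal_basis_expansion[OF fin onB spB] by simp
  have gg: "norm g ^ 2 = (\<Sum>u\<in>B. a u)"
    using inner_sum_sum_orthonormal[OF fin onB, of "\<lambda>u. g \<bullet> u" "\<lambda>u. g \<bullet> u"]
    by (simp add: g_eq a_def dot_square_norm power2_eq_square)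
  have ww: "norm w ^ 2 = (\<Sum>u\<in>B. a u / (\<mu> u)\<^sup>2)"
    using inner_sum_sum_orthonormal[OF fin onB, of "\<lambda>u. (g \<bullet> u) / \<mu> u" "\<lambda>u. (g \<bullet> u) / \<mu> u"]
    by (simp add: w_def a_def dot_square_norm power2_eq_square)
  have wg: "w \<bullet> g = (\<Sum>u\<in>B. a u / \<mu> u)"
    using inner_sum_sum_orthonormal[OF fin onB, of "\<lambda>u. (g \<bullet> u) / \<mu> u" "\<lambda>u. g \<bullet> u"]
    by (simp add: w_def a_def g_eq power2_eq_square)
  have termwise: "a u / M\<^sup>2 \<le> a u / (\<mu> u)\<^sup>2" "a u / (\<mu> u)\<^sup>2 \<le> a u / m\<^sup>2"
    "a u / M \<le> a u / \<mu> u" "a u / \<mu> u \<le> a u / m"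
    "m * (a u / (\<mu> u)\<^sup>2) \<le> a u / \<mu> u" "a u / \<mu> u \<le> M * (a u / (\<mu> u)\<^sup>2)"
    if "u \<in> B" for u
  proof -
    have a: "0 \<le> a u" and \<mu>u: "m \<le> \<mu> u" "\<mu> u \<le> M" and \<mu>0: "0 < \<mu> u"
      using \<mu>[OF that] m by (auto simp: a_def)
    show "a u / M\<^sup>2 \<le> a u / (\<mu> u)\<^sup>2" "a u / (\<mu> u)\<^sup>2 \<le> a u / m\<^sup>2"
      using a \<mu>u \<mu>0 m by (intro divide_left_mono power_mono; simp)+
    show "a u / M \<le> a u / \<mu> u" "a u / \<mu> u \<le> a u / m"
      using a \<mu>u \<mu>0 m by (intro divide_left_mono; simp)+
    have "m * (a u / (\<mu> u)\<^sup>2) = (m / \<mu> u) * (a u / \<mu> u)"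
      by (simp add: power2_eq_square)
    also have "\<dots> \<le> a u / \<mu> u"
      using a \<mu>u \<mu>0 m by (intro mult_left_le_one_le) auto
    finally show "m * (a u / (\<mu> u)\<^sup>2) \<le> a u / \<mu> u" .
    have "a u / \<mu> u \<le> (M / \<mu> u) * (a u / \<mu> u)"
      using mult_right_mono[of 1 "M / \<mu> u" "a u / \<mu> u"] a \<mu>u \<mu>0 by simp
    also have "\<dots> = M * (a u / (\<mu> u)\<^sup>2)"
      by (simp add: power2_eq_square)
    finally show "a u / \<mu> u \<le> M * (a u / (\<mu> u)\<^sup>2)" .
  qed
  have sq: "norm g ^ 2 / M\<^sup>2 \<le> norm w ^ 2" "norm w ^ 2 \<le> norm g ^ 2 / m\<^sup>2"
    unfolding gg ww sum_divide_distrib by (intro sum_mono termwise; assumption)+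
  show "norm g ^ 2 / M \<le> w \<bullet> g" "w \<bullet> g \<le> norm g ^ 2 / m"
    unfolding gg wg sum_divide_distrib by (intro sum_mono termwise; assumption)+
  show "m * norm w ^ 2 \<le> w \<bullet> g" "w \<bullet> g \<le> M * norm w ^ 2"
    unfolding ww wg sum_distrib_left by (intro sum_mono termwise; assumption)+
  have "(norm g / M)\<^sup>2 \<le> (norm w)\<^sup>2"
    using sq(1) by (simp add: power_divide)
  then show "norm g / M \<le> norm w"
    by (rule power2_le_imp_le) simp
  have "(norm w)\<^sup>2 \<le> (norm g / m)\<^sup>2"
    using sq(2) by (simp add: power_divide)
  then show "norm w \<le> norm g / m"
    by (rule power2_le_imp_le) (use m in simp)
qed

lemma pr_pos_minus_pr_neg_inverse_expansion:
  fixes A :: "real^'n^'n" and g :: "real^'n"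
  assumes symA: "transpose A = A" and B: "orthonormal_eigenbasis A B"
    and nonsing: "0 \<notin> mat_eigenvalues A"
  defines "v \<equiv> matrix_inv A *v g"
  shows "pr_pos A v - pr_neg A v = (\<Sum>u\<in>B. ((g \<bullet> u) / \<bar>u \<bullet> (A *v u)\<bar>) *\<^sub>R u)"
proof -
  have ev: "\<forall>u\<in>B. A *v u = (u \<bullet> (A *v u)) *\<^sub>R u"
    using B unfolding orthonormal_eigenbasis_def by auto
  have nz: "u \<bullet> (A *v u) \<noteq> 0" if "u \<in> B" for u
    using nonsing that unfolding mat_eigenvalues_eq_image[OF symA B] by auto
  have Av: "A *v v = g"
    unfolding v_def by (rule matrix_vector_mult_matrix_inv[OF invertible_if_0_notin_mat_eigenvalues[OF nonsing]])
  have vu: "v \<bullet> u = (g \<bullet> u) / (u \<bullet> (A *v u))" if "u \<in> B" for u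
  proof -
    have "g \<bullet> u = (u \<bullet> (A *v u)) * (v \<bullet> u)"
      using inner_matrix_vector_symmetric[OF symA, of v u] Av ev that
      by (metis inner_scaleR_right)
    then show ?thesis
      using nz[OF that] by (simp add: field_simps)
  qed
  have "pr_pos A v - pr_neg A v = (\<Sum>u\<in>B.
      ((if 0 < u \<bullet> (A *v u) then v \<bullet> u else 0) - (if u \<bullet> (A *v u) < 0 then v \<bullet> u else 0)) *\<^sub>R u)"
    unfolding pr_pos_def pr_neg_def
      orth_proj_eigenvectors[OF symA B, of "\<lambda>l. 0 < l", simplified]
      orth_proj_eigenvectors[OF symA B, of "\<lambda>l. l < 0", simplified]
    by (simp add: sum_subtractf scaleR_diff_left)
  also have "\<dots> = (\<Sum>u\<in>B. ((g \<bullet> u) / \<bar>u \<bullet> (A *v u)\<bar>) *\<^sub>R u)"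
    using nz by (intro sum.cong) (auto simp: vu abs_if)
  finally show ?thesis .
qed

lemma symmetric_pr_pos_minus_pr_neg_bounds:
  fixes A :: "real^'n^'n" and g :: "real^'n"
  assumes symA: "transpose A = A" and pos: "minsp A > 0"
  defines "w \<equiv> pr_pos A (matrix_inv A *v g) - pr_neg A (matrix_inv A *v g)"
  shows "norm g / sp A \<le> norm w" and "norm w \<le> norm g / minsp A"
    and "norm g ^ 2 / sp A \<le> w \<bullet> g" and "w \<bullet> g \<le> norm g ^ 2 / minsp A"
    and "minsp A * norm w ^ 2 \<le> w \<bullet> g" and "w \<bullet> g \<le> sp A * norm w ^ 2"
proof -
  obtain B where B: "orthonormal_eigenbasis A B"
    using symmetric_matrix_orthonormal_eigenbasis[OF symA] by blast
  then have fin: "finite B" and onB: "orthonormal B" and spB: "span B = UNIV"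
    unfolding orthonormal_eigenbasis_def by auto
  have "0 \<notin> mat_eigenvalues A"
    using symmetric_minsp_le_abs_eigenvalue[OF symA] pos by fastforce
  then have w: "w = (\<Sum>u\<in>B. ((g \<bullet> u) / \<bar>u \<bullet> (A *v u)\<bar>) *\<^sub>R u)"
    unfolding w_def by (rule pr_pos_minus_pr_neg_inverse_expansion[OF symA B])
  have "minsp A \<le> \<bar>u \<bullet> (A *v u)\<bar> \<and> \<bar>u \<bullet> (A *v u)\<bar> \<le> sp A" if "u \<in> B" for u
    using symmetric_minsp_le_abs_eigenvalue[OF symA] that
    unfolding mat_eigenvalues_eq_image[OF symA B] by blast
  from orthonormal_weighted_expansion_bounds[where \<mu> = "\<lambda>u. \<bar>u \<bullet> (A *v u)\<bar>" and g = g,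
      OF fin onB spB pos this, folded w]
  show "norm g / sp A \<le> norm w" "norm w \<le> norm g / minsp A"
    "norm g ^ 2 / sp A \<le> w \<bullet> g" "w \<bullet> g \<le> norm g ^ 2 / minsp A"
    "minsp A * norm w ^ 2 \<le> w \<bullet> g" "w \<bullet> g \<le> sp A * norm w ^ 2"
    by auto
qed

lemma two_kappa_le:
  assumes "i \<le> m" "j \<le> m" "i \<noteq> j"
  shows "2 * kappa \<delta> m \<le> \<bar>\<delta> i - \<delta> j\<bar>"
proof -
  have "{\<bar>\<delta> i - \<delta> j\<bar> | i j. i \<le> m \<and> j \<le> m \<and> i \<noteq> j} \<subseteq> (\<lambda>(i, j). \<bar>\<delta> i - \<delta> j\<bar>) ` ({..m} \<times> {..m})"
    by force
  then have "finite {\<bar>\<delta> i - \<delta> j\<bar> | i j. i \<le> m \<and> j \<le> m \<and> i \<noteq> j}"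
    by (rule finite_subset) simp
  then show ?thesis
    unfolding kappa_def using assms by (auto intro: Min_le)
qed

lemma kappa_pos:
  assumes "1 \<le> m" and "inj_on \<delta> {0..m}"
  shows "kappa \<delta> m > 0"
proof -
  let ?D = "{\<bar>\<delta> i - \<delta> j\<bar> | i j. i \<le> m \<and> j \<le> m \<and> i \<noteq> j}"
  have "finite ?D"
    by (rule finite_subset[of _ "(\<lambda>(i, j). \<bar>\<delta> i - \<delta> j\<bar>) ` ({..m} \<times> {..m})"]) force+
  moreover have "\<bar>\<delta> 0 - \<delta> 1\<bar> \<in> ?D"
    using assms(1) by force
  moreover have "\<forall>d\<in>?D. d > 0"
    using assms(2) by (auto simp: inj_on_def)
  ultimately have "Min ?D > 0"
    by (subst Min_gr_iff) auto
  then show ?thesis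
    unfolding kappa_def by simp
qed

lemma exists_shift_away_from:
  fixes E :: "real set"
  assumes finE: "finite E" and cardE: "card E \<le> m" and t: "t > 0"
  shows "\<exists>j\<le>m. \<forall>l\<in>E. kappa \<delta> m * t \<le> \<bar>l + \<delta> j * t\<bar>"
proof (rule ccontr)
  assume "\<not> ?thesis"
  then have "\<forall>j\<in>{0..m}. \<exists>l. l \<in> E \<and> \<bar>l + \<delta> j * t\<bar> < kappa \<delta> m * t"
    by (metis atLeastAtMost_iff not_le)
  then obtain \<phi> where \<phi>: "\<And>j. j \<in> {0..m} \<Longrightarrow> \<phi> j \<in> E \<and> \<bar>\<phi> j + \<delta> j * t\<bar> < kappa \<delta> m * t"
    using bchoice by metis
  have "inj_on \<phi> {0..m}"
  proof (rule inj_onI, rule ccontr)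
    fix i j assume ij: "i \<in> {0..m}" "j \<in> {0..m}" "\<phi> i = \<phi> j" "i \<noteq> j"
    have "\<bar>\<delta> i - \<delta> j\<bar> * t = \<bar>(\<phi> j + \<delta> i * t) - (\<phi> j + \<delta> j * t)\<bar>"
      using t by (simp add: abs_mult left_diff_distrib[symmetric])
    also have "\<dots> \<le> \<bar>\<phi> i + \<delta> i * t\<bar> + \<bar>\<phi> j + \<delta> j * t\<bar>"
      using ij(3) by (simp add: abs_triangle_ineq4)
    also have "\<dots> < 2 * kappa \<delta> m * t"
      using \<phi>[OF ij(1)] \<phi>[OF ij(2)] by linarith
    finally have "\<bar>\<delta> i - \<delta> j\<bar> < 2 * kappa \<delta> m"
      using t by simp
    then show False
      using two_kappa_le[of i m j \<delta>] ij by auto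
  qed
  then have "card {0..m} \<le> card E"
    using \<phi> finE by (intro card_inj_on_le) auto
  then show False
    using cardE by simp
qed

lemma kappa_le_minsp_A_mat:
  fixes H :: "real^'n^'n" and g :: "real^'n"
  assumes symH: "transpose H = H" and g: "g \<noteq> 0"
  shows "kappa \<delta> CARD('n) * norm g powr \<tau> \<le> minsp (A_mat \<delta> \<tau> H g)"
proof -
  define t where "t = norm g powr \<tau>"
  define E where "E = mat_eigenvalues H"
  have finE: "finite E" and neE: "E \<noteq> {}" and cardE: "card E \<le> CARD('n)"
    using symmetric_mat_eigenvalues[OF symH] unfolding E_def by auto
  have minsp_shift: "minsp (H + (\<delta> j * t) *\<^sub>R mat 1) = Min ((\<lambda>l. \<bar>l + \<delta> j * t\<bar>) ` E)" for j
    unfolding minsp_def mat_eigenvalues_add_scaled_id E_def by (simp add: image_image)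
  have "t > 0"
    unfolding t_def using g by simp
  with finE cardE obtain j where "j \<le> CARD('n)" "\<forall>l\<in>E. kappa \<delta> CARD('n) * t \<le> \<bar>l + \<delta> j * t\<bar>"
    using exists_shift_away_from by blast
  then have "\<exists>j. j \<le> CARD('n) \<and> kappa \<delta> CARD('n) * t \<le> minsp (H + (\<delta> j * t) *\<^sub>R mat 1)"
    using finE neE by (auto simp: minsp_shift)
  from LeastI_ex[OF this] show ?thesis
    unfolding A_mat_def delta_sel_def t_def by blast
qed

lemma has_real_derivative_along_line:
  fixes f :: "'a::real_normed_vector \<Rightarrow> real"
  assumes "(f has_derivative f') (at (p + s *\<^sub>R h))"
  shows "((\<lambda>s. f (p + s *\<^sub>R h)) has_real_derivative f' h) (at s)"
proof -
  have "((\<lambda>s. p + s *\<^sub>R h) has_derivative (\<lambda>d. d *\<^sub>R h)) (at s)"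
    by (auto intro!: derivative_eq_intros)
  from has_derivative_compose[OF this assms] show ?thesis
    unfolding has_field_derivative_def
    by (rule has_derivative_eq_rhs)
      (simp add: fun_eq_iff linear_scale[OF has_derivative_linear[OF assms]])
qed

lemma second_difference_mean_value:
  fixes f :: "'a::real_normed_vector \<Rightarrow> real"
  assumes f': "\<And>y. (f has_derivative f' y) (at y)"
    and f'': "\<And>y h. ((\<lambda>y. f' y h) has_derivative (\<lambda>k. f'' y k h)) (at y)"
  shows "\<exists>\<xi>. norm (\<xi> - x) \<le> norm h + norm k \<and> f (x + h + k) - f (x + h) - f (x + k) + f x = f'' \<xi> k h"
proof -
  define G where "G s = f (x + k + s *\<^sub>R h) - f (x + s *\<^sub>R h)" for s
  have dG: "(G has_real_derivative (f' (x + k + s *\<^sub>R h) h - f' (x + s *\<^sub>R h) h)) (at s)" for s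
    unfolding G_def by (intro DERIV_diff has_real_derivative_along_line f')
  obtain s where s: "0 < s" "s < 1"
    and Gs: "G 1 - G 0 = f' (x + k + s *\<^sub>R h) h - f' (x + s *\<^sub>R h) h"
    using MVT2[OF zero_less_one dG] by auto
  define p where "p = x + s *\<^sub>R h"
  have dH: "((\<lambda>r. f' (p + r *\<^sub>R k) h) has_real_derivative f'' (p + r *\<^sub>R k) k h) (at r)" for r
    using f'' by (rule has_real_derivative_along_line)
  obtain r where r: "0 < r" "r < 1"
    and Hr: "f' (p + 1 *\<^sub>R k) h - f' (p + 0 *\<^sub>R k) h = f'' (p + r *\<^sub>R k) k h"
    using MVT2[OF zero_less_one dH] by auto
  have "f (x + h + k) - f (x + h) - f (x + k) + f x = G 1 - G 0"
    unfolding G_def by (simp add: algebra_simps)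
  also have "\<dots> = f'' (p + r *\<^sub>R k) k h"
    using Gs Hr by (simp add: p_def add_ac)
  finally have eq: "f (x + h + k) - f (x + h) - f (x + k) + f x = f'' (p + r *\<^sub>R k) k h" .
  have "norm ((p + r *\<^sub>R k) - x) \<le> norm (s *\<^sub>R h) + norm (r *\<^sub>R k)"
    unfolding p_def using norm_triangle_ineq[of "s *\<^sub>R h" "r *\<^sub>R k"] by (simp add: algebra_simps)
  also have "\<dots> \<le> norm h + norm k"
    using s r by (intro add_mono) (auto intro: mult_left_le_one_le)
  finally show ?thesis
    using eq by blast
qed

text \<open>
  Schwarz's theorem: the second difference of \<open>f\<close> is symmetric in \<open>h\<close> and \<open>k\<close>, and by the mean
  value theorem it is a value of \<open>D2f\<close> near \<open>x\<close> applied in either order.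
\<close>

lemma hessian_symmetric:
  fixes f :: "real^'m \<Rightarrow> real" and Df :: "real^'m \<Rightarrow> real^'m" and D2f :: "real^'m \<Rightarrow> real^'m^'m"
  assumes grad: "\<And>y. (f has_derivative (\<lambda>h. Df y \<bullet> h)) (at y)"
    and hess: "\<And>y. (Df has_derivative (\<lambda>h. D2f y *v h)) (at y)"
    and cont: "isCont D2f x"
  shows "transpose (D2f x) = D2f x"
proof -
  have hess_inner: "((\<lambda>y. Df y \<bullet> h) has_derivative (\<lambda>k. (D2f y *v k) \<bullet> h)) (at y)" for y h
    using hess by (rule has_derivative_inner_left)
  note second_diff = second_difference_mean_value[OF grad hess_inner]
  have entry: "(M *v (s *\<^sub>R axis j 1)) \<bullet> (s *\<^sub>R axis i 1) = s\<^sup>2 * M $ i $ j"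
    for M :: "real^'m^'m" and s i j
    by (simp add: matrix_vector_mult_scaleR matrix_vector_mult_basis inner_axis column_def
        power2_eq_square)
  have entry_le_norm: "\<bar>N $ i $ j\<bar> \<le> norm N" for N :: "real^'m^'m" and i j
    using component_le_norm_cart[where x = "N $ i" and i = j] Finite_Cartesian_Product.norm_nth_le[where x = N and i = i]
    by linarith
  have "D2f x $ i $ j = D2f x $ j $ i" for i j
  proof (rule ccontr)
    define a where "a = \<bar>D2f x $ i $ j - D2f x $ j $ i\<bar>"
    assume "D2f x $ i $ j \<noteq> D2f x $ j $ i"
    then have "a > 0"
      unfolding a_def by simp
    then obtain d where d: "d > 0" and near: "\<And>y. dist y x < d \<Longrightarrow> dist (D2f y) (D2f x) < a / 2"
      using cont unfolding continuous_at_eps_delta by (metis half_gt_zero)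
    define s where "s = d / 4"
    define h where "h = s *\<^sub>R (axis i 1 :: real^'m)"
    define k where "k = s *\<^sub>R (axis j 1 :: real^'m)"
    have s: "s > 0" and nhk: "norm h + norm k < d"
      unfolding h_def k_def s_def using d by auto
    obtain \<xi>1 where \<xi>1: "norm (\<xi>1 - x) \<le> norm h + norm k"
      and e1: "f (x + h + k) - f (x + h) - f (x + k) + f x = (D2f \<xi>1 *v k) \<bullet> h"
      using second_diff[of x h k] by blast
    obtain \<xi>2 where \<xi>2: "norm (\<xi>2 - x) \<le> norm k + norm h"
      and e2: "f (x + k + h) - f (x + k) - f (x + h) + f x = (D2f \<xi>2 *v h) \<bullet> k"
      using second_diff[of x k h] by blast
    have "(D2f \<xi>1 *v k) \<bullet> h = (D2f \<xi>2 *v h) \<bullet> k"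
      using e1 e2 by (simp add: algebra_simps)
    then have eq: "D2f \<xi>1 $ i $ j = D2f \<xi>2 $ j $ i"
      using s unfolding h_def k_def entry by simp
    have "dist \<xi>1 x < d" "dist \<xi>2 x < d"
      using \<xi>1 \<xi>2 nhk by (auto simp: dist_norm)
    then have "\<bar>D2f \<xi>1 $ i $ j - D2f x $ i $ j\<bar> < a / 2" "\<bar>D2f \<xi>2 $ j $ i - D2f x $ j $ i\<bar> < a / 2"
      using near entry_le_norm[of "D2f \<xi>1 - D2f x" i j] entry_le_norm[of "D2f \<xi>2 - D2f x" j i]
      by (fastforce simp: dist_norm)+
    moreover have False if "\<bar>p - q\<bar> < \<bar>q - r\<bar> / 2" "\<bar>p - r\<bar> < \<bar>q - r\<bar> / 2" for p q r :: real
      using that by (auto simp: abs_if split: if_splits)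
    ultimately show False
      using eq unfolding a_def by metis
  qed
  then show ?thesis
    by (simp add: vec_eq_iff transpose_def)
qed

lemma eventually_sufficient_decrease:
  fixes f :: "'a::real_inner \<Rightarrow> real"
  assumes grad: "(f has_derivative (\<lambda>h. g \<bullet> h)) (at x)" and descent: "w \<bullet> g > 0" and c: "c < 1"
  shows "\<exists>\<gamma>b>0. \<forall>\<gamma>. 0 < \<gamma> \<and> \<gamma> < \<gamma>b \<longrightarrow> f (x - \<gamma> *\<^sub>R w) - f x \<le> - c * \<gamma> * (w \<bullet> g)"
proof -
  define \<phi> where "\<phi> \<gamma> = f (x + \<gamma> *\<^sub>R (- w))" for \<gamma>
  have "(\<phi> has_real_derivative g \<bullet> (- w)) (at 0)"
    unfolding \<phi>_def using has_real_derivative_along_line[of f "\<lambda>h. g \<bullet> h" x 0 "- w"] grad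
    by simp
  then have "(\<phi> has_real_derivative - (w \<bullet> g)) (at 0)"
    by (simp add: inner_commute)
  then have "((\<lambda>\<gamma>. (\<phi> \<gamma> - \<phi> 0) / (\<gamma> - 0)) \<longlongrightarrow> - (w \<bullet> g)) (at 0)"
    by (simp add: has_field_derivative_iff)
  moreover have "- (w \<bullet> g) < - c * (w \<bullet> g)"
    using descent c by (simp add: mult_less_cancel_right)
  ultimately have "eventually (\<lambda>\<gamma>. (\<phi> \<gamma> - \<phi> 0) / (\<gamma> - 0) < - c * (w \<bullet> g)) (at 0)"
    by (rule order_tendstoD(2))
  then obtain d where d: "d > 0"
    and quot: "\<And>\<gamma>. \<gamma> \<noteq> 0 \<Longrightarrow> dist \<gamma> 0 < d \<Longrightarrow> (\<phi> \<gamma> - \<phi> 0) / \<gamma> < - c * (w \<bullet> g)"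
    unfolding eventually_at by auto
  have "f (x - \<gamma> *\<^sub>R w) - f x \<le> - c * \<gamma> * (w \<bullet> g)" if "0 < \<gamma>" "\<gamma> < d" for \<gamma>
    using quot[of \<gamma>] that by (simp add: \<phi>_def pos_divide_less_eq algebra_simps)
  then show ?thesis
    using d by blast
qed

theorem lemma1:
  fixes f :: "real^'m \<Rightarrow> real"
    and Df :: "real^'m \<Rightarrow> real^'m"
    and D2f :: "real^'m \<Rightarrow> real^'m^'m"
    and \<delta> :: "nat \<Rightarrow> real"
    and \<tau> :: real
    and x :: "real^'m"
  assumes grad: "\<And>y. (f has_derivative (\<lambda>h. Df y \<bullet> h)) (at y)"
    and hess: "\<And>y. (Df has_derivative (\<lambda>h. D2f y *v h)) (at y)"
    and hess_cont: "continuous_on UNIV D2f"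
    and distinct: "inj_on \<delta> {0..CARD('m)}"
    and tau: "\<tau> > 0"
    and nz: "Df x \<noteq> 0"
  shows "let A = A_mat \<delta> \<tau> (D2f x) (Df x); w = w_vec \<delta> \<tau> (D2f x) (Df x); g = Df x in
           (norm g / sp A \<le> norm w \<and> norm w \<le> norm g / minsp A)
         \<and> (norm g ^ 2 / sp A \<le> w \<bullet> g \<and> w \<bullet> g \<le> norm g ^ 2 / minsp A
            \<and> minsp A * norm w ^ 2 \<le> w \<bullet> g \<and> w \<bullet> g \<le> sp A * norm w ^ 2)
         \<and> (\<exists>\<gamma>b>0. \<forall>\<gamma>. 0 < \<gamma> \<and> \<gamma> < \<gamma>b \<longrightarrow>
               f (x - \<gamma> *\<^sub>R w) - f x \<le> - \<gamma> * (w \<bullet> g) / 3)"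
proof -
  define g where "g = Df x"
  define A where "A = A_mat \<delta> \<tau> (D2f x) g"
  define w where "w = w_vec \<delta> \<tau> (D2f x) g"
  have symH: "transpose (D2f x) = D2f x"
    using hessian_symmetric[OF grad hess] hess_cont by (simp add: continuous_on_eq_continuous_at)
  have symA: "transpose A = A"
    unfolding A_def A_mat_def by (rule transpose_add_scaled_id[OF symH])
  have "0 < kappa \<delta> CARD('m) * norm g powr \<tau>"
    using kappa_pos[OF _ distinct] nz unfolding g_def by (simp add: Suc_le_eq)
  also have "\<dots> \<le> minsp A"
    unfolding A_def g_def by (rule kappa_le_minsp_A_mat[OF symH nz])
  finally have pos: "minsp A > 0" .
  have "w = pr_pos A (matrix_inv A *v g) - pr_neg A (matrix_inv A *v g)"
    unfolding w_def w_vec_def v_vec_def A_def ..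
  note bounds = symmetric_pr_pos_minus_pr_neg_bounds[OF symA pos, where g = g, folded this]
  have "0 < norm g ^ 2 / sp A"
    using nz pos symmetric_minsp_le_sp[OF symA] unfolding g_def by simp
  then have "w \<bullet> g > 0"
    using bounds(3) by linarith
  from eventually_sufficient_decrease[OF grad[of x, folded g_def] this, of "1 / 3"]
  have "\<exists>\<gamma>b>0. \<forall>\<gamma>. 0 < \<gamma> \<and> \<gamma> < \<gamma>b \<longrightarrow> f (x - \<gamma> *\<^sub>R w) - f x \<le> - \<gamma> * (w \<bullet> g) / 3"
    by simp
  with bounds show ?thesis
    unfolding Let_def A_def w_def g_def by blast
qed

end
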